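(* Let $\mathsf{A}\subset GL_2(\mathbb{R})$ with $\mathscr{R}(\mathsf{A})\neq\emptyset$ be such that $\mathcal{S}(\mathsf{A})$ is almost multiplicative. Let $X_u=\{A\mathbb{R}^2 : A\in\mathscr{R}(\mathsf{A})\}\subset\mathbb{RP}^1$ and $X_s=\{\ker A : A\in\mathscr{R}(\mathsf{A})\}\subset\mathbb{RP}^1$. Then $X_u$ and $X_s$ are nonempty, compact, and disjoint. Furthermore, for every nonzero $A\in\mathscr{S}(\mathsf{A})$ and every $V\in X_u$, $AV$ is a line and $AV\in X_u$.
   Context: $\|\cdot\|$ is the operator norm; $\mathbb{RP}^1$ is the real projective line (lines through the origin of $\mathbb{R}^2$). $\mathcal{S}(\mathsf{A})$ is the semigroup of finite products of elements of $\mathsf{A}$; $\mathscr{S}(\mathsf{A})=\overline{\mathbb{R}\mathcal{S}(\mathsf{A})}\subset M_2(\mathbb{R})$; $\mathscr{R}(\mathsf{A})=\{A\in\mathscr{S}(\mathsf{A}):\operatorname{rank}(A)=1\}$. A semigroup $\mathcal{S}$ is almost multiplicative if there is $\kappa>0$ with $\|AB\|\ge\kappa\|A\|\|B\|$ for all $A,B\in\mathcal{S}$. *)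

theory Defs
  imports "HOL-Analysis.Analysis"
begin

type_synonym mat2 = "real^2^2"

definition opnorm :: "mat2 \<Rightarrow> real" where
  "opnorm M = onorm (\<lambda>x. M *v x)"

inductive_set semigrp :: "mat2 set \<Rightarrow> mat2 set" for As where
  gen: "M \<in> As \<Longrightarrow> M \<in> semigrp As"
| mult: "M \<in> semigrp As \<Longrightarrow> N \<in> semigrp As \<Longrightarrow> M ** N \<in> semigrp As"

definition scrS :: "mat2 set \<Rightarrow> mat2 set" where
  "scrS As = closure {c *\<^sub>R M | c M. M \<in> semigrp As}"

definition scrR :: "mat2 set \<Rightarrow> mat2 set" where
  "scrR As = {M \<in> scrS As. rank M = 1}"

definition almost_multiplicative :: "mat2 set \<Rightarrow> bool" where
  "almost_multiplicative S \<longleftrightarrow>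
     (\<exists>\<kappa>>0. \<forall>A\<in>S. \<forall>B\<in>S. opnorm (A ** B) \<ge> \<kappa> * opnorm A * opnorm B)"

definition RP1 :: "(real^2) set set" where
  "RP1 = {L. \<exists>v. v \<noteq> 0 \<and> L = span {v}}"

text \<open>Topology of RP^1: the quotient topology of the unit circle under v \<mapsto> span{v}.\<close>
definition rp1_topology :: "(real^2) set topology" where
  "rp1_topology = topology (\<lambda>U. U \<subseteq> RP1 \<and>
      openin (top_of_set (sphere 0 1)) {v \<in> sphere 0 1. span {v} \<in> U})"

lemma istopology_rp1: "istopology (\<lambda>U. U \<subseteq> RP1 \<and>
      openin (top_of_set (sphere (0::real^2) 1)) {v \<in> sphere 0 1. span {v} \<in> U})"
proof -
  have 1: "{v \<in> sphere (0::real^2) 1. span {v} \<in> S \<inter> T} =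
        {v \<in> sphere 0 1. span {v} \<in> S} \<inter> {v \<in> sphere 0 1. span {v} \<in> T}" for S T by auto
  have 2: "{v \<in> sphere (0::real^2) 1. span {v} \<in> \<Union>K} =
        \<Union>((\<lambda>U. {v \<in> sphere 0 1. span {v} \<in> U}) ` K)" for K by auto
  show ?thesis unfolding istopology_def
    apply (intro conjI allI impI)
       apply blast
      apply (simp only: 1)
      apply (blast intro: openin_Int)
     apply blast
    apply (simp only: 2)
    apply (rule openin_Union)
    apply blast
    done
qed

end

theory Submission
  imports Defs
begin

text \<open>Almost multiplicativity of \<open>semigrp As\<close> passes to the cone over it by homogeneity of
  the norm, and then to its closure \<open>scrS As\<close> by continuity, so nonzero elements of \<open>scrS As\<close>
  have nonzero products. For rank-one \<open>M\<close> and \<open>N\<close> this says that the image of \<open>M\<close> is never the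
  kernel of \<open>N\<close>; for nonzero \<open>A\<close> it says that \<open>A M\<close> is again of rank one, with image the
  image of \<open>M\<close> under \<open>A\<close>. Images and kernels are invariant under rescaling, so both families
  of lines are already swept out by the compact set of rank-one elements of norm one. The unit
  vectors spanning these lines then form a compact subset of the circle, whose image in the
  projective line is compact.\<close>

lemma opnorm_scaleR: "opnorm (c *\<^sub>R M) = \<bar>c\<bar> * opnorm M"
proof -
  have "opnorm (c *\<^sub>R M) = onorm (\<lambda>x. c *\<^sub>R (M *v x))"
    unfolding opnorm_def by (simp add: scaleR_matrix_vector_assoc)
  also have "\<dots> = \<bar>c\<bar> * opnorm M"
    unfolding opnorm_def by (rule onorm_scaleR[OF matrix_vector_mul_bounded_linear])
  finally show ?thesis .
qed

lemma opnorm_0 [simp]: "opnorm 0 = 0"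
proof -
  have "(*v) (0::mat2) = (\<lambda>x. 0)" by (simp add: fun_eq_iff)
  then show ?thesis unfolding opnorm_def by (simp add: onorm_zero)
qed

lemma opnorm_pos: "M \<noteq> 0 \<Longrightarrow> opnorm M > 0"
  unfolding opnorm_def
  by (metis matrix_eq matrix_vector_mult_0 onorm_pos_lt[OF matrix_vector_mul_bounded_linear])

lemma opnorm_triangle: "opnorm (M + N) \<le> opnorm M + opnorm N"
  unfolding opnorm_def matrix_vector_mult_add_rdistrib
  by (rule onorm_triangle[OF matrix_vector_mul_bounded_linear matrix_vector_mul_bounded_linear])

lemma opnorm_le_norm: "opnorm M \<le> 4 * norm M"
proof -
  have "\<bar>M $ i $ j\<bar> \<le> norm M" for i j
    by (rule order_trans[OF component_le_norm_cart Finite_Cartesian_Product.norm_nth_le])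
  then have "opnorm M \<le> real CARD(2) * real CARD(2) * norm M"
    unfolding opnorm_def by (rule onorm_le_matrix_component)
  then show ?thesis by simp
qed

lemma continuous_on_opnorm [continuous_intros]:
  assumes "continuous_on S f"
  shows "continuous_on S (\<lambda>x. opnorm (f x))"
proof -
  have "4-lipschitz_on UNIV opnorm"
  proof (rule lipschitz_onI)
    fix M N :: mat2
    have "opnorm M - opnorm N \<le> 4 * norm (M - N)"
      using opnorm_triangle[of "M - N" N] opnorm_le_norm[of "M - N"] by simp
    moreover have "opnorm N - opnorm M \<le> 4 * norm (M - N)"
      using opnorm_triangle[of "N - M" M] opnorm_le_norm[of "N - M"]
      by (simp add: norm_minus_commute)
    ultimately show "dist (opnorm M) (opnorm N) \<le> 4 * dist M N"
      by (simp add: dist_real_def dist_norm abs_le_iff)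
  qed simp
  then show ?thesis
    by (rule continuous_on_compose2[OF lipschitz_on_continuous_on assms subset_UNIV])
qed

subsection \<open>Almost multiplicativity of the closed cone\<close>

lemma continuous_on_matrix_matrix_mult [continuous_intros]:
  fixes f :: "'a::topological_space \<Rightarrow> real^'n^'m"
  shows "continuous_on S f \<Longrightarrow> continuous_on S g \<Longrightarrow> continuous_on S (\<lambda>x. f x ** g x)"
  unfolding matrix_matrix_mult_def by (intro continuous_on_vec_lambda continuous_intros)

lemma continuous_on_matrix_vector_mult [continuous_intros]:
  fixes f :: "'a::topological_space \<Rightarrow> real^'n^'m"
  shows "continuous_on S f \<Longrightarrow> continuous_on S g \<Longrightarrow> continuous_on S (\<lambda>x. f x *v g x)"
  unfolding matrix_vector_mult_def by (intro continuous_on_vec_lambda continuous_intros)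

lemma matrix_mult_eq_0_iff_range_subset_kernel:
  fixes M :: "real^'k^'n" and N :: "real^'n^'m"
  shows "N ** M = 0 \<longleftrightarrow> range (\<lambda>x. M *v x) \<subseteq> {x. N *v x = 0}"
  by (auto simp: matrix_eq matrix_vector_mul_assoc[symmetric])

lemma scaleR_matrix_mult_scaleR: "(a *\<^sub>R M) ** (b *\<^sub>R N) = (a * b) *\<^sub>R (M ** N)"
  for M :: "real^'n^'m" and N :: "real^'k^'n"
  by (simp add: matrix_scalar_ac scalar_matrix_assoc mult.commute)

lemma almost_multiplicative_cone:
  assumes "almost_multiplicative S"
  shows "almost_multiplicative {c *\<^sub>R M | c M. M \<in> S}"
proof -
  obtain k where k: "k > 0" "\<And>M N. M \<in> S \<Longrightarrow> N \<in> S \<Longrightarrow> k * opnorm M * opnorm N \<le> opnorm (M ** N)"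
    using assms unfolding almost_multiplicative_def by blast
  have cone_ineq: "k * opnorm (a *\<^sub>R M) * opnorm (b *\<^sub>R N) \<le> opnorm ((a *\<^sub>R M) ** (b *\<^sub>R N))"
    if "M \<in> S" "N \<in> S" for a b M N
  proof -
    have "k * opnorm (a *\<^sub>R M) * opnorm (b *\<^sub>R N) = \<bar>a * b\<bar> * (k * opnorm M * opnorm N)"
      by (simp add: opnorm_scaleR abs_mult algebra_simps)
    also have "\<dots> \<le> \<bar>a * b\<bar> * opnorm (M ** N)"
      using k(2)[OF that] by (rule mult_left_mono) simp
    finally show ?thesis
      by (simp add: scaleR_matrix_mult_scaleR opnorm_scaleR)
  qed
  then show ?thesis
    unfolding almost_multiplicative_def using k(1) by (intro exI[of _ k]) (auto intro: cone_ineq)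
qed

lemma almost_multiplicative_closure:
  assumes "almost_multiplicative S"
  shows "almost_multiplicative (closure S)"
proof -
  obtain k where k: "k > 0" "\<forall>M\<in>S. \<forall>N\<in>S. k * opnorm M * opnorm N \<le> opnorm (M ** N)"
    using assms unfolding almost_multiplicative_def by blast
  let ?P = "{p :: mat2 \<times> mat2. k * opnorm (fst p) * opnorm (snd p) \<le> opnorm (fst p ** snd p)}"
  have "closed ?P"
    by (intro closed_Collect_le continuous_intros)
  moreover have "S \<times> S \<subseteq> ?P" using k(2) by auto
  ultimately have closure_P: "closure S \<times> closure S \<subseteq> ?P"
    unfolding closure_Times[symmetric] by (rule closure_minimal[rotated])
  have "k * opnorm M * opnorm N \<le> opnorm (M ** N)" if "M \<in> closure S" "N \<in> closure S" for M N
    using subsetD[OF closure_P, of "(M, N)"] that by simp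
  then show ?thesis unfolding almost_multiplicative_def using k(1) by blast
qed

lemma almost_multiplicative_mult_neq_0:
  assumes "almost_multiplicative S" "M \<in> S" "N \<in> S" "M \<noteq> 0" "N \<noteq> 0"
  shows "M ** N \<noteq> 0"
proof -
  obtain k where "k > 0" "k * opnorm M * opnorm N \<le> opnorm (M ** N)"
    using assms(1-3) unfolding almost_multiplicative_def by blast
  moreover have "opnorm M > 0" "opnorm N > 0" using assms(4,5) opnorm_pos by blast+
  ultimately have "opnorm (M ** N) > 0" by (smt (verit) mult_pos_pos)
  then show ?thesis by auto
qed

lemma scrS_eq_closure_cone: "scrS As = closure {c *\<^sub>R M | c M. M \<in> semigrp As}"
  unfolding scrS_def ..

lemma almost_multiplicative_scrS:
  "almost_multiplicative (semigrp As) \<Longrightarrow> almost_multiplicative (scrS As)"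
  unfolding scrS_eq_closure_cone
  by (intro almost_multiplicative_closure almost_multiplicative_cone)

lemma closed_scrS: "closed (scrS As)"
  unfolding scrS_def by simp

lemma scrS_scaleR: "M \<in> scrS As \<Longrightarrow> c *\<^sub>R M \<in> scrS As"
proof -
  have "(*\<^sub>R) c ` {a *\<^sub>R M | a M. M \<in> semigrp As} \<subseteq> {a *\<^sub>R M | a M. M \<in> semigrp As}"
    by auto (metis scaleR_scaleR)
  then have "closure ((*\<^sub>R) c ` {a *\<^sub>R M | a M. M \<in> semigrp As}) \<subseteq> scrS As"
    unfolding scrS_eq_closure_cone by (rule closure_mono)
  then show "M \<in> scrS As \<Longrightarrow> c *\<^sub>R M \<in> scrS As"
    unfolding scrS_eq_closure_cone closure_scaleR[symmetric] by blast
qed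

lemma scrS_mult: "M \<in> scrS As \<Longrightarrow> N \<in> scrS As \<Longrightarrow> M ** N \<in> scrS As"
proof -
  let ?C = "{c *\<^sub>R M | c M. M \<in> semigrp As}"
  have "(\<lambda>p. fst p ** snd p) ` (?C \<times> ?C) \<subseteq> ?C"
    by (auto simp: scaleR_matrix_mult_scaleR) (metis semigrp.mult)
  also have "?C \<subseteq> scrS As"
    unfolding scrS_eq_closure_cone by (rule closure_subset)
  finally have "(\<lambda>p. fst p ** snd p) ` closure (?C \<times> ?C) \<subseteq> scrS As"
    by (intro image_closure_subset closed_scrS continuous_intros)
  then show "M \<in> scrS As \<Longrightarrow> N \<in> scrS As \<Longrightarrow> M ** N \<in> scrS As"
    unfolding scrS_eq_closure_cone closure_Times by (auto simp: image_subset_iff)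
qed

lemma rank_eq_1_iff_det: "rank M = 1 \<longleftrightarrow> M \<noteq> 0 \<and> det M = 0"
  for M :: "real^2^2"
proof -
  have "rank M \<le> 2" using rank_bound[of M] by simp
  moreover have "det M = 0 \<longleftrightarrow> rank M < 2" using det_eq_0_rank[of M] by simp
  moreover have "rank M = 0 \<longleftrightarrow> M = 0" by (rule rank_eq_0)
  ultimately show ?thesis by linarith
qed

lemma span_scaleR_singleton: "c \<noteq> 0 \<Longrightarrow> span {c *\<^sub>R v} = span {v}"
  for v :: "'a :: real_vector"
  using span_image_scale[of "{v}" "\<lambda>_. c"] by simp

lemma span_sgn_singleton: "span {sgn v} = span {v}"
  for v :: "'a :: real_normed_vector"
  by (cases "v = 0") (simp_all add: sgn_div_norm span_scaleR_singleton)

lemma in_span_unit_iff: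
  fixes v :: "'a :: real_inner"
  assumes "norm v = 1"
  shows "y \<in> span {v} \<longleftrightarrow> y = (y \<bullet> v) *\<^sub>R v"
proof
  assume "y \<in> span {v}"
  then obtain k where "y = k *\<^sub>R v" unfolding span_singleton by auto
  moreover have "v \<bullet> v = 1" using assms by (simp add: dot_square_norm)
  ultimately show "y = (y \<bullet> v) *\<^sub>R v" by simp
next
  assume "y = (y \<bullet> v) *\<^sub>R v"
  then show "y \<in> span {v}" by (metis span_base span_scale singletonI)
qed

lemma subspace_eq_span_singleton:
  fixes S :: "'a :: euclidean_space set"
  assumes "subspace S" "dim S \<le> 1" "v \<in> S" "v \<noteq> 0"
  shows "S = span {v}"
proof (rule sym, rule subspace_dim_equal)
  show "span {v} \<subseteq> S" using assms(1,3) by (simp add: span_minimal)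
  show "dim S \<le> dim (span {v})" using assms(2,4) by simp
qed (simp_all add: assms(1))

lemma range_matrix_eq_span:
  fixes M :: "real^'n^'m"
  assumes "rank M = 1" "range (\<lambda>x. M *v x) \<subseteq> span {v}"
  shows "range (\<lambda>x. M *v x) = span {v}"
proof (rule subspace_dim_equal)
  show "subspace (range (\<lambda>x. M *v x))"
    by (rule linear_subspace_image[OF matrix_vector_mul_linear subspace_UNIV])
  show "dim (span {v}) \<le> dim (range (\<lambda>x. M *v x))"
    using assms(1) rank_dim_range[of M] by simp
qed (simp_all add: assms(2))

lemma range_matrix_eq_span_unit:
  fixes M :: "real^'n^'m"
  assumes "rank M = 1"
  obtains v where "norm v = 1" "range (\<lambda>x. M *v x) = span {v}"
proof -
  obtain x where x: "M *v x \<noteq> 0"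
    using assms rank_eq_0[of M] matrix_eq[of M 0] by auto
  have "range (\<lambda>x. M *v x) = span {M *v x}"
  proof (rule subspace_eq_span_singleton)
    show "subspace (range (\<lambda>x. M *v x))"
      by (rule linear_subspace_image[OF matrix_vector_mul_linear subspace_UNIV])
    show "dim (range (\<lambda>x. M *v x)) \<le> 1"
      using assms rank_dim_range[of M] by simp
  qed (simp_all add: x)
  then show ?thesis
    using that[of "sgn (M *v x)"] x by (simp add: norm_sgn span_sgn_singleton)
qed

lemma kernel_matrix_eq_span:
  fixes M :: mat2
  assumes "M \<noteq> 0" "M *v v = 0" "v \<noteq> 0"
  shows "{x. M *v x = 0} = span {v}"
proof (rule subspace_eq_span_singleton)
  let ?K = "{x. M *v x = 0}"
  show K: "subspace ?K"
    using linear_subspace_kernel[OF matrix_vector_mul_linear[of M]] by simp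
  have "?K \<noteq> UNIV" using assms(1) matrix_eq[of M 0] by auto
  then have "span ?K \<noteq> UNIV" using K span_eq_iff by metis
  then have "dim ?K \<noteq> 2" using dim_eq_full[of ?K] by simp
  moreover have "dim ?K \<le> 2" using dim_subset_UNIV_cart[of ?K] by simp
  ultimately show "dim ?K \<le> 1" by simp
qed (use assms in simp_all)

lemma kernel_matrix_eq_span_unit:
  fixes M :: mat2
  assumes "M \<noteq> 0" "det M = 0"
  obtains v where "norm v = 1" "{x. M *v x = 0} = span {v}"
proof -
  obtain v where v: "v \<noteq> 0" "M *v v = 0"
    using assms(2) det_eq_0_rank[of M] matrix_nonfull_linear_equations_eq[of M] by auto
  then show ?thesis
    using that[of "sgn v"] kernel_matrix_eq_span[OF assms(1)]
    by (simp add: norm_sgn span_sgn_singleton)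
qed

subsection \<open>The projective line\<close>

lemma span_singleton_in_RP1: "v \<noteq> 0 \<Longrightarrow> span {v} \<in> RP1"
  unfolding RP1_def by blast

lemma openin_rp1_topology:
  "openin rp1_topology U \<longleftrightarrow>
     U \<subseteq> RP1 \<and> openin (top_of_set (sphere 0 1)) {v \<in> sphere 0 1. span {v} \<in> U}"
  unfolding rp1_topology_def using istopology_rp1 by simp

lemma topspace_rp1_topology: "topspace rp1_topology = RP1"
proof -
  have "{v \<in> sphere (0::real^2) 1. span {v} \<in> RP1} = sphere 0 1"
    by (auto intro: span_singleton_in_RP1)
  then have "openin rp1_topology RP1" by (simp add: openin_rp1_topology)
  then have "RP1 \<subseteq> topspace rp1_topology" by (rule openin_subset)
  moreover have "topspace rp1_topology \<subseteq> RP1"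
    using openin_rp1_topology unfolding topspace_def by blast
  ultimately show ?thesis by blast
qed

lemma continuous_map_span_rp1:
  "continuous_map (top_of_set (sphere 0 1)) rp1_topology (\<lambda>v. span {v})"
  unfolding continuous_map_def topspace_rp1_topology openin_rp1_topology
  by (auto intro: span_singleton_in_RP1)

lemma compactin_rp1_span_image:
  assumes "compact K" "K \<subseteq> sphere 0 1"
  shows "compactin rp1_topology ((\<lambda>v. span {v}) ` K)"
  by (rule image_compactin[OF _ continuous_map_span_rp1])
     (use assms in \<open>simp add: compactin_subtopology\<close>)

subsection \<open>Compact families of lines\<close>

lemma image_eq_image_Int_sphere:
  fixes f :: "'a::real_normed_vector \<Rightarrow> 'b"
  assumes "0 \<notin> S" "\<And>x. x \<in> S \<Longrightarrow> sgn x \<in> S \<and> f (sgn x) = f x"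
  shows "f ` S = f ` (S \<inter> sphere 0 1)"
proof
  show "f ` S \<subseteq> f ` (S \<inter> sphere 0 1)"
  proof
    fix y assume "y \<in> f ` S"
    then obtain x where "x \<in> S" "y = f x" by blast
    moreover have "x \<noteq> 0" using \<open>x \<in> S\<close> assms(1) by blast
    ultimately show "y \<in> f ` (S \<inter> sphere 0 1)"
      using assms(2) by (metis IntI image_eqI mem_sphere_0 norm_sgn)
  qed
qed blast

lemma compact_sphere_witnessed:
  fixes K :: "'a::topological_space set"
  assumes "compact K" "closed {p. P (fst p) (snd p)}"
  shows "compact {v \<in> sphere (0::'b::euclidean_space) 1. \<exists>M\<in>K. P M v}"
proof -
  let ?T = "(K \<times> sphere (0::'b) 1) \<inter> {p. P (fst p) (snd p)}"
  have "compact ?T"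
    using assms by (intro compact_Int_closed compact_Times compact_sphere)
  then have "compact (snd ` ?T)"
    by (rule compact_continuous_image[OF continuous_on_snd[OF continuous_on_id]])
  moreover have "snd ` ?T = {v \<in> sphere 0 1. \<exists>M\<in>K. P M v}"
  proof (rule equalityI)
    show "{v \<in> sphere 0 1. \<exists>M\<in>K. P M v} \<subseteq> snd ` ?T"
    proof
      fix v assume "v \<in> {v \<in> sphere 0 1. \<exists>M\<in>K. P M v}"
      then obtain M where "M \<in> K" "P M v" "v \<in> sphere 0 1" by blast
      then have "(M, v) \<in> ?T" by simp
      then show "v \<in> snd ` ?T" by (rule rev_image_eqI) simp
    qed
  qed auto
  ultimately show ?thesis by simp
qed

lemma compactin_rp1_ranges:
  fixes K :: "mat2 set"
  assumes "compact K" "\<And>M. M \<in> K \<Longrightarrow> rank M = 1"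
  shows "compactin rp1_topology ((\<lambda>M. range (\<lambda>x. M *v x)) ` K)"
proof -
  let ?W = "{v \<in> sphere 0 1. \<exists>M\<in>K. \<forall>x. M *v x = ((M *v x) \<bullet> v) *\<^sub>R v}"
  have "(\<lambda>M. range (\<lambda>x. M *v x)) ` K = (\<lambda>v. span {v}) ` ?W"
  proof (intro equalityI subsetI)
    fix V assume "V \<in> (\<lambda>M. range (\<lambda>x. M *v x)) ` K"
    then obtain M where M: "M \<in> K" "V = range (\<lambda>x. M *v x)" by blast
    then obtain v where v: "norm v = 1" "V = span {v}"
      using range_matrix_eq_span_unit assms(2) by metis
    then have "\<forall>x. M *v x = ((M *v x) \<bullet> v) *\<^sub>R v"
      using M(2) in_span_unit_iff by blast
    then show "V \<in> (\<lambda>v. span {v}) ` ?W" using M(1) v by auto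
  next
    fix V assume "V \<in> (\<lambda>v. span {v}) ` ?W"
    then obtain v M where "norm v = 1" "M \<in> K" "V = span {v}"
      and "\<forall>x. M *v x = ((M *v x) \<bullet> v) *\<^sub>R v" by auto
    then have "range (\<lambda>x. M *v x) = V"
      using range_matrix_eq_span assms(2) in_span_unit_iff by (metis image_subsetI)
    then show "V \<in> (\<lambda>M. range (\<lambda>x. M *v x)) ` K" using \<open>M \<in> K\<close> by blast
  qed
  moreover have "compact ?W"
    using assms(1) by (intro compact_sphere_witnessed closed_Collect_all closed_Collect_eq continuous_intros)
  ultimately show ?thesis by (metis (no_types, lifting) compactin_rp1_span_image mem_Collect_eq subsetI)
qed

lemma compactin_rp1_kernels:
  fixes K :: "mat2 set"
  assumes "compact K" "\<And>M. M \<in> K \<Longrightarrow> M \<noteq> 0 \<and> det M = 0"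
  shows "compactin rp1_topology ((\<lambda>M. {x. M *v x = 0}) ` K)"
proof -
  let ?W = "{v \<in> sphere 0 1. \<exists>M\<in>K. M *v v = 0}"
  have "(\<lambda>M. {x. M *v x = 0}) ` K = (\<lambda>v. span {v}) ` ?W"
  proof (intro equalityI subsetI)
    fix V assume "V \<in> (\<lambda>M. {x. M *v x = 0}) ` K"
    then obtain M where M: "M \<in> K" "V = {x. M *v x = 0}" by blast
    then obtain v where v: "norm v = 1" "V = span {v}"
      using kernel_matrix_eq_span_unit assms(2) by metis
    then have "M *v v = 0" using M(2) span_base by blast
    then show "V \<in> (\<lambda>v. span {v}) ` ?W" using M(1) v by auto
  next
    fix V assume "V \<in> (\<lambda>v. span {v}) ` ?W"
    then obtain v M where "norm v = 1" "M \<in> K" "M *v v = 0" "V = span {v}" by auto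
    then have "{x. M *v x = 0} = V" using kernel_matrix_eq_span assms(2) by fastforce
    then show "V \<in> (\<lambda>M. {x. M *v x = 0}) ` K" using \<open>M \<in> K\<close> by blast
  qed
  moreover have "compact ?W"
    using assms(1) by (intro compact_sphere_witnessed closed_Collect_eq continuous_intros)
  ultimately show ?thesis by (metis (no_types, lifting) compactin_rp1_span_image mem_Collect_eq subsetI)
qed

lemma scrR_iff: "M \<in> scrR As \<longleftrightarrow> M \<in> scrS As \<and> M \<noteq> 0 \<and> det M = 0"
  unfolding scrR_def using rank_eq_1_iff_det[of M] by blast

lemma compact_scrR_Int_sphere: "compact (scrR As \<inter> sphere 0 1)"
proof -
  have "scrR As \<inter> sphere 0 1 = scrS As \<inter> sphere 0 1 \<inter> {M. det M = 0}"
    by (auto simp: scrR_iff)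
  moreover have "closed {M :: mat2. det M = 0}"
    unfolding det_2 by (intro closed_Collect_eq continuous_intros)
  ultimately show ?thesis
    using closed_scrS by (metis bounded_Int compact_eq_bounded_closed closed_Int compact_sphere)
qed

lemma sgn_in_scrR: "M \<in> scrR As \<Longrightarrow> sgn M \<in> scrR As"
  by (auto simp: scrR_iff sgn_div_norm scrS_scaleR det_2 algebra_simps)

lemma range_matrix_sgn: "range (\<lambda>x. sgn M *v x) = range (\<lambda>x. M *v x)"
  for M :: "real^'n^'m"
proof (cases "M = 0")
  case False
  have "(\<lambda>x. sgn M *v x) = (\<lambda>x. M *v x) \<circ> (\<lambda>x. x /\<^sub>R norm M)"
    by (simp add: fun_eq_iff sgn_div_norm scaleR_matrix_vector_assoc[symmetric]
        matrix_vector_mult_scaleR)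
  moreover have "range (\<lambda>x :: real^'n. x /\<^sub>R norm M) = UNIV"
    using False by (intro surjI[of _ "\<lambda>x. norm M *\<^sub>R x"]) simp
  ultimately show ?thesis by (metis image_comp)
qed simp

lemma kernel_matrix_sgn: "{x. sgn M *v x = 0} = {x. M *v x = 0}"
  for M :: "real^'n^'m"
  by (cases "M = 0") (simp_all add: sgn_div_norm scaleR_matrix_vector_assoc[symmetric])

theorem lemma3p3:
  fixes As :: "mat2 set"
  assumes GL: "\<forall>M\<in>As. invertible M"
    and nonempty_R: "scrR As \<noteq> {}"
    and am: "almost_multiplicative (semigrp As)"
  defines "Xu \<equiv> {range (\<lambda>x. M *v x) | M. M \<in> scrR As}"
    and "Xs \<equiv> {{x. M *v x = 0} | M. M \<in> scrR As}"
  shows "Xu \<noteq> {} \<and> Xs \<noteq> {} \<and> Xu \<subseteq> RP1 \<and> Xs \<subseteq> RP1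
      \<and> compactin rp1_topology Xu \<and> compactin rp1_topology Xs \<and> Xu \<inter> Xs = {}
      \<and> (\<forall>M\<in>scrS As. M \<noteq> 0 \<longrightarrow> (\<forall>V\<in>Xu.
            (\<lambda>x. M *v x) ` V \<in> RP1 \<and> (\<lambda>x. M *v x) ` V \<in> Xu))"
proof -
  let ?K = "scrR As \<inter> sphere 0 1"
  have am_scrS: "almost_multiplicative (scrS As)"
    using am by (rule almost_multiplicative_scrS)
  have no_0: "0 \<notin> scrR As" by (simp add: scrR_iff)
  have Xu: "Xu = (\<lambda>M. range (\<lambda>x. M *v x)) ` ?K"
    unfolding Xu_def Setcompr_eq_image
    by (rule image_eq_image_Int_sphere[OF no_0]) (simp add: sgn_in_scrR range_matrix_sgn)
  have Xs: "Xs = (\<lambda>M. {x. M *v x = 0}) ` ?K"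
    unfolding Xs_def Setcompr_eq_image
    by (rule image_eq_image_Int_sphere[OF no_0]) (simp add: sgn_in_scrR kernel_matrix_sgn)
  have compact_Xu: "compactin rp1_topology Xu"
    unfolding Xu by (rule compactin_rp1_ranges[OF compact_scrR_Int_sphere]) (simp add: scrR_def)
  have compact_Xs: "compactin rp1_topology Xs"
    unfolding Xs by (rule compactin_rp1_kernels[OF compact_scrR_Int_sphere]) (simp add: scrR_iff)
  have "Xu \<inter> Xs = {}"
    using almost_multiplicative_mult_neq_0[OF am_scrS]
    unfolding Xu_def Xs_def scrR_iff matrix_mult_eq_0_iff_range_subset_kernel by blast
  moreover have "(\<lambda>x. M *v x) ` V \<in> Xu" if M: "M \<in> scrS As" "M \<noteq> 0" and V: "V \<in> Xu" for M V
  proof -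
    obtain N where N: "N \<in> scrR As" "V = range (\<lambda>x. N *v x)"
      using V unfolding Xu_def by blast
    then have "M ** N \<in> scrR As"
      using M almost_multiplicative_mult_neq_0[OF am_scrS]
      by (auto simp: scrR_iff scrS_mult det_mul)
    moreover have "(\<lambda>x. M *v x) ` V = range (\<lambda>x. (M ** N) *v x)"
      unfolding N(2) by (simp add: image_image matrix_vector_mul_assoc)
    ultimately show ?thesis unfolding Xu_def by blast
  qed
  moreover have "Xu \<subseteq> RP1" "Xs \<subseteq> RP1"
    using compact_Xu compact_Xs compactin_subset_topspace topspace_rp1_topology by blast+
  moreover have "Xu \<noteq> {}" "Xs \<noteq> {}"
    using nonempty_R unfolding Xu_def Xs_def by auto
  ultimately show ?thesis using compact_Xu compact_Xs by blast
qed

end
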